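(* Let $X,Y$ be binary variables and suppose the experimental quantities $P(y_x),P(y_{x'})$ and observational quantities $P(y),P(x,y),P(x,y'),P(x',y),P(x',y')$ are estimated by sample frequencies from $m$ experimental samples and $n$ observational samples. If $\sqrt{\tfrac{1}{m}}+\sqrt{\tfrac{1}{n}}\le \tfrac{5}{196}$, then the margin of error of each of the estimated bounds of PNS, $$\max\{0,\;P(y_x)-P(y_{x'}),\;P(y)-P(y_{x'}),\;P(y_x)-P(y)\}\le \mathrm{PNS}\le \min\{P(y_x),\;P(y'_{x'}),\;P(x,y)+P(x',y'),\;P(y_x)-P(y_{x'})+P(x,y')+P(x',y)\},$$ in a $95\%$ confidence interval is at most $0.05$. In particular, if $m=n$, then $m=n=6147$ experimental and observational samples suffice to obtain margin of error at most $0.05$ for the bounds of PNS in a $95\%$ confidence interval.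
   Context: Counterfactual notation: $y_x$ denotes the event "$Y$ would be $y$ had $X$ been $x$", and similarly $y_{x'}$, $y'_{x'}$; $\mathrm{PNS}=P(y_x,y'_{x'})$. For a probability $p$ estimated by the frequency $\hat p$ from $k$ samples (experimental quantities from the $m$ experimental samples, observational quantities from the $n$ observational samples), its margin of error in a $1-\alpha$ confidence interval is $z_{1-\alpha/2}\sqrt{\hat p(1-\hat p)/k}$ where $z_{1-\alpha/2}$ is the standard normal quantile (for $95\%$, $z_{0.975}=1.96$), and the margin of error of a sum or difference of such estimates is bounded by the sum of their margins of error. *)

theory Defs
  imports Complex_Main
begin

text \<open>Margin of error (95\<percent>, z = 1.96) of a probability estimated by the frequency ph from k samples.\<close>
definition moe :: "nat \<Rightarrow> real \<Rightarrow> real" where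
  "moe k ph = 1.96 * sqrt (ph * (1 - ph) / real k)"

definition freq :: "nat \<Rightarrow> nat \<Rightarrow> real" where
  "freq c k = real c / real k"

text \<open>Margins of error of the eight terms in the PNS bounds
  max{0, P(y_x)-P(y_x'), P(y)-P(y_x'), P(y_x)-P(y)} <= PNS <=
  min{P(y_x), P(y'_x'), P(x,y)+P(x',y'), P(y_x)-P(y_x')+P(x,y')+P(x',y)},
  where the margin of a sum/difference is bounded by the sum of the margins.\<close>
definition PNS_bound_margins ::
  "nat \<Rightarrow> nat \<Rightarrow> real \<Rightarrow> real \<Rightarrow> real \<Rightarrow> real \<Rightarrow> real \<Rightarrow> real \<Rightarrow> real \<Rightarrow> real list" where
  "PNS_bound_margins m n pyx pyx' py pxy pxy' px'y px'y' =
    [ 0,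
      moe m pyx + moe m pyx',
      moe n py + moe m pyx',
      moe m pyx + moe n py,
      moe m pyx,
      moe m (1 - pyx'),
      moe n pxy + moe n px'y',
      moe m pyx + moe m pyx' + moe n pxy' + moe n px'y ]"

end

theory Submission
  imports Defs
begin

text \<open>The margin of error of a frequency is largest at \<open>p = 1/2\<close>, where it equals \<open>0.98 / sqrt k\<close>.
  Each PNS bound combines at most two estimates from each of the two samples, so all its
  margins are at most \<open>1.96 (sqrt (1/m) + sqrt (1/n)) \<le> 1.96 * 5/196 = 0.05\<close>, whatever the
  estimates are.
  For \<open>m = n = 6147\<close> the hypothesis holds because \<open>(392/5)\<^sup>2 = 6146.56 \<le> 6147\<close>.\<close>

lemma mult_one_minus_le_quarter: "(p::real) * (1 - p) \<le> 1/4"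
proof -
  have "0 \<le> (p - 1/2)\<^sup>2" by simp
  then show ?thesis by (simp add: power2_eq_square algebra_simps)
qed

lemma moe_le: "moe k p \<le> 0.98 * sqrt (1 / real k)"
proof -
  have "p * (1 - p) / real k \<le> (1/4) / real k"
    using mult_one_minus_le_quarter by (rule divide_right_mono) simp
  then have "sqrt (p * (1 - p) / real k) \<le> sqrt (1/4 * (1 / real k))"
    by (simp add: real_sqrt_le_mono)
  also have "\<dots> = 1/2 * sqrt (1 / real k)"
    by (simp add: real_sqrt_mult real_sqrt_divide)
  finally show ?thesis unfolding moe_def by simp
qed

lemma PNS_bound_margins_le:
  assumes "e \<in> set (PNS_bound_margins m n pyx pyx' py pxy pxy' px'y px'y')"
  shows "e \<le> 1.96 * (sqrt (1 / real m) + sqrt (1 / real n))"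
proof -
  have decimals: "(0.98::real) = 49/50" "(1.96::real) = 49/25" by simp_all
  have "0 \<le> sqrt (1 / real m)" "0 \<le> sqrt (1 / real n)" by simp_all
  then show ?thesis
    using assms moe_le[of m pyx] moe_le[of m pyx'] moe_le[of m "1 - pyx'"] moe_le[of n py]
      moe_le[of n pxy] moe_le[of n pxy'] moe_le[of n px'y] moe_le[of n px'y']
    unfolding PNS_bound_margins_def decimals
    by (simp only: list.set insert_iff empty_iff simp_thms distrib_left) (elim disjE; linarith)
qed

lemma PNS_bound_margins_le_005:
  assumes "sqrt (1 / real m) + sqrt (1 / real n) \<le> 5 / 196"
  shows "\<forall>e \<in> set (PNS_bound_margins m n pyx pyx' py pxy pxy' px'y px'y'). e \<le> 0.05"
proof
  fix e assume "e \<in> set (PNS_bound_margins m n pyx pyx' py pxy pxy' px'y px'y')"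
  then have "e \<le> 1.96 * (sqrt (1 / real m) + sqrt (1 / real n))"
    by (rule PNS_bound_margins_le)
  also have "\<dots> \<le> 1.96 * (5 / 196)"
    using assms by (rule mult_left_mono) simp
  finally show "e \<le> 0.05" by simp
qed

lemma sqrt_inverse_6147_le: "sqrt (1 / real (6147::nat)) \<le> 5 / 392"
  by (rule real_le_lsqrt) (simp_all add: power2_eq_square)

theorem corollary1:
  shows "(\<forall>(m::nat) (n::nat) cyx cyx' cy cxy cxy' cx'y cx'y'.
            0 < m \<and> 0 < n \<and> cyx \<le> m \<and> cyx' \<le> m \<and>
            cy \<le> n \<and> cxy \<le> n \<and> cxy' \<le> n \<and> cx'y \<le> n \<and> cx'y' \<le> n \<and>
            sqrt (1 / real m) + sqrt (1 / real n) \<le> 5 / 196 \<longrightarrow>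
            (\<forall>e \<in> set (PNS_bound_margins m n (freq cyx m) (freq cyx' m) (freq cy n)
                   (freq cxy n) (freq cxy' n) (freq cx'y n) (freq cx'y' n)). e \<le> 0.05))
       \<and> (\<forall>cyx cyx' cy cxy cxy' cx'y cx'y'.
            cyx \<le> (6147::nat) \<and> cyx' \<le> 6147 \<and>
            cy \<le> 6147 \<and> cxy \<le> 6147 \<and> cxy' \<le> 6147 \<and> cx'y \<le> 6147 \<and> cx'y' \<le> 6147 \<longrightarrow>
            (\<forall>e \<in> set (PNS_bound_margins 6147 6147 (freq cyx 6147) (freq cyx' 6147) (freq cy 6147)
                   (freq cxy 6147) (freq cxy' 6147) (freq cx'y 6147) (freq cx'y' 6147)). e \<le> 0.05))"
proof -
  have "sqrt (1 / real (6147::nat)) + sqrt (1 / real (6147::nat)) \<le> 5 / 196"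
    using sqrt_inverse_6147_le by linarith
  then show ?thesis
    using PNS_bound_margins_le_005 by blast
qed

end
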